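(* Let $p$ be an odd prime and let $k$ be an integer with $2\le k\le p-1$. Let $k^{-1}$ denote the least non-negative integer congruent to the inverse of $k$ modulo $p$, and let $K=\min\{k,k^{-1}\}$. If $T$ is an orthogonal trade in $B_p$ of index $(1,k)$, then every symbol that occurs in $T$ occurs in $T$ more than $\log_K(p)+1$ times.
   Context: All arithmetic is modulo $p$. A Latin square of order $p$ is viewed as a set of (row, column, symbol) triples in $\mathbb{Z}_p^3$. For $1\le k\le p-1$, $B_p(k)$ is the Latin square with symbol $ki+j$ in cell $(i,j)$, $i,j\in\mathbb{Z}_p$; $B_p=B_p(1)$. A Latin trade in a Latin square $L$ is a subset $T\subseteq L$ for which there is a partial Latin square $T'$ (a disjoint mate) such that $T$ and $T'$ occupy the same set of cells, $T\cap T'=\emptyset$, and each row (respectively column) of $T$ contains the same set of symbols as the corresponding row (column) of $T'$. Two Latin squares of order $p$ are orthogonal if superimposing them yields each of the $p^2$ ordered pairs exactly once. An orthogonal trade of index $(\ell,k)$ is a Latin trade $T\subseteq B_p(\ell)$ having a disjoint mate $T'$ such that $(B_p(\ell)\setminus T)\cup T'$ is orthogonal to $B_p(k)$. *)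

theory Defs
  imports Complex_Main "HOL-Computational_Algebra.Primes"
begin

text \<open>Latin squares of order p are sets of (row, column, symbol) triples with
  entries in {0..<p}, representing Z_p; arithmetic is modulo p.\<close>

type_synonym triple = "nat \<times> nat \<times> nat"

definition Bp :: "nat \<Rightarrow> nat \<Rightarrow> triple set" where
  "Bp p k = {(i, j, (k * i + j) mod p) | i j. i < p \<and> j < p}"

definition cells :: "triple set \<Rightarrow> (nat \<times> nat) set" where
  "cells T = {(i, j). \<exists>s. (i, j, s) \<in> T}"

definition row_syms :: "triple set \<Rightarrow> nat \<Rightarrow> nat set" where
  "row_syms T i = {s. \<exists>j. (i, j, s) \<in> T}"

definition col_syms :: "triple set \<Rightarrow> nat \<Rightarrow> nat set" where
  "col_syms T j = {s. \<exists>i. (i, j, s) \<in> T}"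

definition partial_latin_square :: "nat \<Rightarrow> triple set \<Rightarrow> bool" where
  "partial_latin_square p P \<longleftrightarrow>
     (\<forall>(i, j, s) \<in> P. i < p \<and> j < p \<and> s < p) \<and>
     (\<forall>i j s s'. (i, j, s) \<in> P \<longrightarrow> (i, j, s') \<in> P \<longrightarrow> s = s') \<and>
     (\<forall>i j j' s. (i, j, s) \<in> P \<longrightarrow> (i, j', s) \<in> P \<longrightarrow> j = j') \<and>
     (\<forall>i i' j s. (i, j, s) \<in> P \<longrightarrow> (i', j, s) \<in> P \<longrightarrow> i = i')"

definition disjoint_mate :: "nat \<Rightarrow> triple set \<Rightarrow> triple set \<Rightarrow> bool" where
  "disjoint_mate p T T' \<longleftrightarrow>
     partial_latin_square p T' \<and> cells T' = cells T \<and> T \<inter> T' = {} \<and>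
     (\<forall>i. row_syms T' i = row_syms T i) \<and> (\<forall>j. col_syms T' j = col_syms T j)"

definition latin_trade :: "nat \<Rightarrow> triple set \<Rightarrow> triple set \<Rightarrow> bool" where
  "latin_trade p L T \<longleftrightarrow> T \<subseteq> L \<and> (\<exists>T'. disjoint_mate p T T')"

definition orthogonal :: "nat \<Rightarrow> triple set \<Rightarrow> triple set \<Rightarrow> bool" where
  "orthogonal p L1 L2 \<longleftrightarrow>
     (\<forall>a < p. \<forall>b < p. \<exists>!c. fst c < p \<and> snd c < p \<and>
         (fst c, snd c, a) \<in> L1 \<and> (fst c, snd c, b) \<in> L2)"

definition orthogonal_trade :: "nat \<Rightarrow> nat \<Rightarrow> nat \<Rightarrow> triple set \<Rightarrow> bool" where
  "orthogonal_trade p l k T \<longleftrightarrow>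
     T \<subseteq> Bp p l \<and>
     (\<exists>T'. disjoint_mate p T T' \<and> orthogonal p ((Bp p l - T) \<union> T') (Bp p k))"

end

theory Submission
  imports Defs "HOL-Number_Theory.Cong" "HOL-Library.FuncSet"
begin

text \<open>Fix a symbol \<open>s\<close> of the trade \<open>T\<close> and let \<open>R\<close> be the set of rows in which \<open>T\<close> contains
  \<open>s\<close>. Going from row \<open>i\<close> to the column \<open>c i\<close> holding \<open>s\<close> in the mate and back along that
  column in \<open>T\<close> gives a fixed-point-free injection \<open>\<sigma>\<close> of \<open>R\<close>; orthogonality with \<open>B_p(k)\<close>
  forces the cell of \<open>B_p\<close> with symbol \<open>s\<close> and \<open>B_p(k)\<close>-symbol \<open>k i + c i\<close> into a row
  \<open>\<tau> i \<in> R\<close>. Hence \<open>k i = \<sigma> i + (k - 1) \<tau> i\<close> mod \<open>p\<close>, and inverting \<open>\<sigma>\<close> gives the same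
  kind of relation for \<open>k\<^sup>-\<^sup>1\<close>.

  A relation \<open>a i = f i + (a - 1) g i\<close> with \<open>f r \<noteq> r\<close> forces \<open>p \<le> a ^ (|R| - 1)\<close>: read it
  as a chip-firing rule on the part of \<open>R\<close> reachable from \<open>r\<close>, with sink \<open>r\<close>. The weights
  \<open>i - r\<close> are invariant mod \<open>p\<close> under firing, and stabilisation writes every residue as a
  combination of the weights of the non-sink vertices with coefficients in \<open>{0..a-1}\<close>. As \<open>p\<close>
  is prime and \<open>1 < min k k\<^sup>-\<^sup>1 < p\<close>, the bound is strict.\<close>

lemma reachable_closed_subset:
  fixes R :: "'a set" and f g :: "'a \<Rightarrow> 'a"
  assumes "finite R" and "r \<in> R" and "f ` R \<subseteq> R" and "g ` R \<subseteq> R"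
    and "inj_on f R" and "inj_on g R"
  obtains S and depth :: "'a \<Rightarrow> nat"
  where "S \<subseteq> R" "r \<in> S" "bij_betw f S S" "bij_betw g S S"
    "\<forall>v\<in>S - {r}. \<exists>w\<in>S. depth w < depth v \<and> (f w = v \<or> g w = v)"
proof -
  define layer where "layer = rec_nat {r} (\<lambda>_ A. A \<union> f ` A \<union> g ` A)"
  have layer_0: "layer 0 = {r}" and
    layer_Suc: "\<And>m. layer (Suc m) = layer m \<union> f ` layer m \<union> g ` layer m"
    by (simp_all add: layer_def)
  have layer_R: "layer m \<subseteq> R" for m
    by (induction m) (use assms in \<open>auto simp: layer_0 layer_Suc\<close>)
  define S where "S = (\<Union>m. layer m)"
  define depth where "depth v = (LEAST m. v \<in> layer m)" for v
  have "S \<subseteq> R" using layer_R by (auto simp: S_def)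
  then have "finite S" using assms(1) finite_subset by blast
  have "f ` S \<subseteq> S" "g ` S \<subseteq> S" unfolding S_def using layer_Suc by blast+
  moreover have "inj_on f S" "inj_on g S"
    using \<open>S \<subseteq> R\<close> assms(5,6) by (auto intro: inj_on_subset)
  ultimately have "bij_betw f S S" "bij_betw g S S"
    using \<open>finite S\<close> by (simp_all add: bij_betw_def endo_inj_surj)
  have "\<exists>w\<in>S. depth w < depth v \<and> (f w = v \<or> g w = v)" if "v \<in> S - {r}" for v
  proof -
    from that obtain m0 where "v \<in> layer m0" by (auto simp: S_def)
    then have v_layer: "v \<in> layer (depth v)" unfolding depth_def by (rule LeastI)
    with that layer_0 obtain m where m: "depth v = Suc m" by (cases "depth v") auto
    have "v \<notin> layer m"
      using Least_le[of "\<lambda>m. v \<in> layer m" m] m by (auto simp: depth_def)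
    with v_layer m layer_Suc obtain w where w: "w \<in> layer m" "f w = v \<or> g w = v" by auto
    have "depth w \<le> m" using w(1) unfolding depth_def by (rule Least_le)
    moreover have "w \<in> S" using w(1) by (auto simp: S_def)
    ultimately show ?thesis using w(2) m by (intro bexI[of _ w]) auto
  qed
  with \<open>S \<subseteq> R\<close> \<open>bij_betw f S S\<close> \<open>bij_betw g S S\<close> layer_0 show thesis
    by (intro that[of S depth]) (auto simp: S_def)
qed

locale rooted_bijections =
  fixes S :: "'a set" and r :: 'a and f g :: "'a \<Rightarrow> 'a" and depth :: "'a \<Rightarrow> nat"
  assumes finite_S: "finite S" and root_in_S: "r \<in> S"
    and bij_f: "bij_betw f S S" and bij_g: "bij_betw g S S"
    and depth_pred: "\<forall>v\<in>S - {r}. \<exists>w\<in>S. depth w < depth v \<and> (f w = v \<or> g w = v)"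
begin

lemma inv_into_S: "v \<in> S \<Longrightarrow> the_inv_into S f v \<in> S" "v \<in> S \<Longrightarrow> the_inv_into S g v \<in> S"
  using bij_betwE[OF bij_betw_the_inv_into[OF bij_f]] bij_betwE[OF bij_betw_the_inv_into[OF bij_g]]
  by auto

lemma inv_into_f: "w \<in> S \<Longrightarrow> the_inv_into S f (f w) = w" "w \<in> S \<Longrightarrow> the_inv_into S g (g w) = w"
  using bij_f bij_g by (auto simp: bij_betw_def the_inv_into_f_f)

text \<open>Chip firing: a vertex \<open>w\<close> fires by losing \<open>a\<close> chips, sending one to \<open>f w\<close> and \<open>a - 1\<close>
  to \<open>g w\<close>; \<open>fire a N v\<close> is the net loss at \<open>v\<close> when every \<open>w\<close> fires \<open>N w\<close> times.\<close>
definition fire :: "nat \<Rightarrow> ('a \<Rightarrow> int) \<Rightarrow> 'a \<Rightarrow> int" where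
  "fire a N v = int a * N v - N (the_inv_into S f v) - (int a - 1) * N (the_inv_into S g v)"

lemma sum_fire:
  "(\<Sum>v\<in>S. fire a N v * x v) = (\<Sum>w\<in>S. N w * (int a * x w - x (f w) - (int a - 1) * x (g w)))"
proof -
  have reindex: "(\<Sum>v\<in>S. N (the_inv_into S h v) * x v) = (\<Sum>w\<in>S. N w * x (h w))"
    if h: "bij_betw h S S" for h
  proof -
    have "(\<Sum>w\<in>S. N w * x (h w)) = (\<Sum>w\<in>S. N (the_inv_into S h (h w)) * x (h w))"
      using h by (intro sum.cong) (auto simp: bij_betw_def the_inv_into_f_f)
    also have "\<dots> = (\<Sum>v\<in>S. N (the_inv_into S h v) * x v)"
      by (rule sum.reindex_bij_betw[OF h])
    finally show ?thesis by simp
  qed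
  have "(\<Sum>v\<in>S. fire a N v * x v) = int a * (\<Sum>v\<in>S. N v * x v)
      - (\<Sum>v\<in>S. N (the_inv_into S f v) * x v) - (int a - 1) * (\<Sum>v\<in>S. N (the_inv_into S g v) * x v)"
    unfolding fire_def left_diff_distrib sum_subtractf by (simp add: sum_distrib_left mult.assoc)
  also have "\<dots> = int a * (\<Sum>w\<in>S. N w * x w)
      - (\<Sum>w\<in>S. N w * x (f w)) - (int a - 1) * (\<Sum>w\<in>S. N w * x (g w))"
    by (simp add: reindex[OF bij_f] reindex[OF bij_g])
  also have "\<dots> = (\<Sum>w\<in>S. N w * (int a * x w - x (f w) - (int a - 1) * x (g w)))"
    unfolding right_diff_distrib sum_subtractf by (simp add: sum_distrib_left mult.left_commute)
  finally show ?thesis .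
qed

lemma exists_superharmonic_potential:
  assumes "a \<ge> 2"
  obtains \<phi> where "\<forall>v\<in>S. 0 \<le> \<phi> v" "\<forall>v\<in>S - {r}. 1 \<le> fire a \<phi> v"
proof
  define D where "D = Max (depth ` S)"
  define B :: int where "B = int a + 1"
  define \<phi> where "\<phi> v = B ^ D - B ^ (D - depth v)" for v
  have B: "B \<ge> 3" using assms by (simp add: B_def)
  have depth_le: "depth v \<le> D" if "v \<in> S" for v using finite_S that by (simp add: D_def)
  show "\<forall>v\<in>S. 0 \<le> \<phi> v"
    using B by (auto simp: \<phi>_def intro: power_increasing)
  have \<phi>_le: "\<phi> v \<le> B ^ D - 1" for v
    using B by (simp add: \<phi>_def)
  have \<phi>_pred: "\<phi> w \<le> B ^ D - B * B ^ (D - depth v)"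
    if "w \<in> S" "v \<in> S" "depth w < depth v" for v w
  proof -
    have "Suc (D - depth v) \<le> D - depth w" using that depth_le[of v] by simp
    then have "B ^ Suc (D - depth v) \<le> B ^ (D - depth w)" using B by (intro power_increasing) auto
    then show ?thesis by (simp add: \<phi>_def)
  qed
  show "\<forall>v\<in>S - {r}. 1 \<le> fire a \<phi> v"
  proof
    fix v assume v: "v \<in> S - {r}"
    define E where "E = B ^ (D - depth v)"
    have "E \<ge> 1" using B by (simp add: E_def)
    have \<phi>_v: "\<phi> v = B ^ D - E" by (simp add: \<phi>_def E_def)
    from depth_pred v obtain w where w: "w \<in> S" "depth w < depth v" "f w = v \<or> g w = v" by blast
    then consider "the_inv_into S f v = w" | "the_inv_into S g v = w" using inv_into_f by auto
    then show "1 \<le> fire a \<phi> v"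
    proof cases
      case 1
      then have "\<phi> (the_inv_into S f v) \<le> B ^ D - B * E"
        using \<phi>_pred[of w v] w v by (simp add: E_def)
      moreover have "(int a - 1) * \<phi> (the_inv_into S g v) \<le> (int a - 1) * (B ^ D - 1)"
        using \<phi>_le assms by (intro mult_left_mono) auto
      ultimately show ?thesis
        using \<open>E \<ge> 1\<close> assms by (simp add: fire_def \<phi>_v B_def algebra_simps)
    next
      case 2
      then have "\<phi> (the_inv_into S g v) \<le> B ^ D - B * E"
        using \<phi>_pred[of w v] w v by (simp add: E_def)
      then have "(int a - 1) * \<phi> (the_inv_into S g v) \<le> (int a - 1) * (B ^ D - B * E)"
        using assms by (intro mult_left_mono) auto
      moreover have "0 \<le> (int a * int a - int a - 1) * E"
        using \<open>E \<ge> 1\<close> assms mult_mono[of 2 "int a" 2 "int a"] by simp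
      ultimately show ?thesis
        using \<phi>_le[of "the_inv_into S f v"] by (simp add: fire_def \<phi>_v B_def algebra_simps)
    qed
  qed
qed

lemma fire_mono:
  assumes "a \<ge> 1" "\<forall>u. M u \<le> N u"
  shows "fire a N v - int a * (N v - M v) \<le> fire a M v"
proof -
  have "(int a - 1) * M (the_inv_into S g v) \<le> (int a - 1) * N (the_inv_into S g v)"
    using assms by (intro mult_left_mono) auto
  moreover have "M (the_inv_into S f v) \<le> N (the_inv_into S f v)" using assms by simp
  ultimately show ?thesis unfolding fire_def by (simp add: algebra_simps)
qed

lemma fire_scale: "fire a (\<lambda>v. m * N v) v = m * fire a N v"
  by (simp add: fire_def algebra_simps)

text \<open>Stabilisation towards the sink \<open>r\<close>: a minimal firing vector keeping all non-sink
  vertices below \<open>a\<close> chips cannot drive any of them negative, since otherwise un-firing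
  that vertex once would give a smaller admissible vector.\<close>
lemma exists_stabilising_firing:
  assumes a: "a \<ge> 2" and c: "\<forall>v\<in>S - {r}. 0 \<le> c v"
  obtains N where "\<forall>v\<in>S. 0 \<le> N v"
    "\<forall>v\<in>S - {r}. 0 \<le> c v - fire a N v \<and> c v - fire a N v < int a"
proof -
  define admissible where "admissible N \<longleftrightarrow>
      (\<forall>v\<in>S. 0 \<le> N v) \<and> (\<forall>v\<in>S - {r}. c v - fire a N v < int a)" for N
  obtain \<phi> where \<phi>: "\<forall>v\<in>S. 0 \<le> \<phi> v" "\<forall>v\<in>S - {r}. 1 \<le> fire a \<phi> v"
    using exists_superharmonic_potential[OF a] .
  define m where "m = (\<Sum>v\<in>S - {r}. c v)"
  have c_le_m: "c v \<le> m" if "v \<in> S - {r}" for v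
    unfolding m_def using finite_S c that by (intro member_le_sum) auto
  have "0 \<le> m" unfolding m_def using c by (intro sum_nonneg) auto
  have "admissible (\<lambda>v. m * \<phi> v)"
    unfolding admissible_def fire_scale
  proof (intro conjI ballI)
    fix v assume "v \<in> S - {r}"
    then have "m * 1 \<le> m * fire a \<phi> v" using \<phi> \<open>0 \<le> m\<close> by (intro mult_left_mono) auto
    with c_le_m[OF \<open>v \<in> S - {r}\<close>] a show "c v - m * fire a \<phi> v < int a" by simp
  qed (use \<phi> \<open>0 \<le> m\<close> in auto)
  then obtain N where adm: "admissible N"
    and least: "\<And>M. admissible M \<Longrightarrow> nat (sum N S) \<le> nat (sum M S)"
    using ex_has_least_nat[of admissible _ "\<lambda>N. nat (sum N S)"] by blast
  have "0 \<le> c v - fire a N v" if v: "v \<in> S - {r}" for v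
  proof (rule ccontr)
    assume neg: "\<not> 0 \<le> c v - fire a N v"
    have "N v \<noteq> 0"
    proof
      assume "N v = 0"
      moreover have "0 \<le> N (the_inv_into S f v)" "0 \<le> (int a - 1) * N (the_inv_into S g v)"
        using adm inv_into_S v a by (auto simp: admissible_def)
      ultimately have "fire a N v \<le> 0" using a by (simp add: fire_def)
      moreover have "0 \<le> c v" using c v by blast
      ultimately show False using neg by linarith
    qed
    with adm v have "1 \<le> N v" by (auto simp: admissible_def)
    define M where "M = N(v := N v - 1)"
    have M_le: "\<forall>u. M u \<le> N u" and M_v: "M v = N v - 1" by (simp_all add: M_def)
    have "admissible M"
      unfolding admissible_def
    proof (intro conjI ballI)
      fix w assume w: "w \<in> S - {r}"
      show "c w - fire a M w < int a"
      proof (cases "w = v")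
        case True
        have "fire a N v - int a \<le> fire a M v"
          using fire_mono[OF _ M_le, where v = v] a M_v by simp
        with True neg show ?thesis by simp
      next
        case False
        then have "M w = N w" by (simp add: M_def)
        then have "fire a N w \<le> fire a M w" using fire_mono[OF _ M_le, where v = w] a by simp
        moreover have "c w - fire a N w < int a" using adm w by (auto simp: admissible_def)
        ultimately show ?thesis by linarith
      qed
    qed (use adm \<open>1 \<le> N v\<close> in \<open>auto simp: admissible_def M_def\<close>)
    moreover have "sum M S = sum N S - 1"
      using finite_S v by (simp add: M_def sum.remove[of S v] sum.cong[of "S - {v}" _ M N])
    moreover have "0 \<le> sum M S"
      using \<open>admissible M\<close> by (auto simp: admissible_def intro: sum_nonneg)
    ultimately show False using least[of M] by linarith
  qed
  with adm show thesis using that unfolding admissible_def by blast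
qed

lemma modulus_le_power_card:
  fixes x :: "'a \<Rightarrow> int" and p a :: nat
  assumes a: "a \<ge> 2" and x_r: "x r = 0" and u: "u \<in> S" and coprime: "coprime (x u) (int p)"
    and invariant: "\<forall>w\<in>S. int p dvd (int a * x w - x (f w) - (int a - 1) * x (g w))"
  shows "p \<le> a ^ (card S - 1)"
proof -
  define val where "val c = (\<Sum>v\<in>S. c v * x v)" for c :: "'a \<Rightarrow> int"
  define box where "box = PiE (S - {r}) (\<lambda>_. {0..int a - 1})"
  have "{0..<int p} \<subseteq> (\<lambda>c. val c mod int p) ` box"
  proof
    fix z assume z: "z \<in> {0..<int p}"
    obtain y where y: "[x u * y = 1] (mod int p)" using cong_solve_coprime_int[OF coprime] by blast
    define c0 where "c0 v = (if v = u then (y * z) mod int p else 0)" for v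
    have val_c0: "[val c0 = z] (mod int p)"
    proof -
      have "val c0 = (\<Sum>v\<in>S. if v = u then (y * z) mod int p * x v else 0)"
        unfolding val_def by (intro sum.cong) (auto simp: c0_def)
      also have "\<dots> = (y * z) mod int p * x u" using finite_S u by simp
      also have "[\<dots> = y * z * x u] (mod int p)" by (simp add: cong_def mod_mult_left_eq)
      also have "y * z * x u = x u * y * z" by simp
      also have "[\<dots> = 1 * z] (mod int p)" by (rule cong_scalar_right[OF y])
      finally show ?thesis by simp
    qed
    have "\<forall>v\<in>S - {r}. 0 \<le> c0 v" using z by (simp add: c0_def)
    then obtain N where N: "\<forall>v\<in>S - {r}. 0 \<le> c0 v - fire a N v \<and> c0 v - fire a N v < int a"
      using exists_stabilising_firing[OF a] by blast
    define c where "c = restrict (\<lambda>v. c0 v - fire a N v) (S - {r})"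
    have "c \<in> box" using N by (auto simp: box_def c_def)
    have "val c = val c0 - (\<Sum>v\<in>S. fire a N v * x v)"
      unfolding val_def sum_subtractf[symmetric] c_def using x_r
      by (intro sum.cong) (auto simp: left_diff_distrib)
    also have "\<dots> = val c0 - (\<Sum>w\<in>S. N w * (int a * x w - x (f w) - (int a - 1) * x (g w)))"
      by (simp add: sum_fire)
    finally have "[val c = val c0] (mod int p)"
      using invariant by (simp add: cong_iff_dvd_diff dvd_sum)
    then have "val c mod int p = z" using val_c0 z by (simp add: cong_def)
    with \<open>c \<in> box\<close> show "z \<in> (\<lambda>c. val c mod int p) ` box" by blast
  qed
  moreover have "finite box" using finite_S by (simp add: box_def finite_PiE)
  ultimately have "card {0..<int p} \<le> card box" by (meson surj_card_le)
  moreover have "card box = a ^ (card S - 1)"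
    using finite_S root_in_S by (simp add: box_def card_PiE card_Diff_singleton)
  ultimately show ?thesis by simp
qed

end

definition affine_maps :: "nat \<Rightarrow> nat \<Rightarrow> nat set \<Rightarrow> (nat \<Rightarrow> nat) \<Rightarrow> (nat \<Rightarrow> nat) \<Rightarrow> bool" where
  "affine_maps p a R f g \<longleftrightarrow> f ` R \<subseteq> R \<and> g ` R \<subseteq> R \<and> inj_on f R \<and> inj_on g R \<and>
     (\<forall>i\<in>R. [int a * int i = int (f i) + (int a - 1) * int (g i)] (mod int p))"

lemma affine_maps_bound:
  assumes p: "prime p" and R: "R \<subseteq> {..<p}" and r: "r \<in> R" and a: "a \<ge> 2"
    and aff: "affine_maps p a R f g" and moved: "f r \<noteq> r"
  shows "p \<le> a ^ (card R - 1)"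
proof -
  have "finite R" using R finite_subset by blast
  have maps: "f ` R \<subseteq> R" "g ` R \<subseteq> R" "inj_on f R" "inj_on g R"
    using aff by (simp_all add: affine_maps_def)
  obtain S and depth :: "nat \<Rightarrow> nat" where S: "S \<subseteq> R" "r \<in> S" "bij_betw f S S" "bij_betw g S S"
    "\<forall>v\<in>S - {r}. \<exists>w\<in>S. depth w < depth v \<and> (f w = v \<or> g w = v)"
    by (rule reachable_closed_subset[OF \<open>finite R\<close> r maps])
  have "finite S" using S(1) \<open>finite R\<close> finite_subset by blast
  interpret rooted_bijections S r f g depth
    by unfold_locales (use S \<open>finite S\<close> in auto)
  define x where "x v = int v - int r" for v
  have "f r \<in> S" using S(2,3) by (auto simp: bij_betw_def)
  have "\<not> int p dvd x (f r)"
  proof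
    assume "int p dvd x (f r)"
    then have "[f r = r] (mod p)" unfolding x_def cong_iff_dvd_diff[symmetric] cong_int_iff .
    moreover have "f r < p" "r < p" using \<open>f r \<in> S\<close> S(1) r R by auto
    ultimately show False using moved cong_less_modulus_unique_nat by blast
  qed
  then have "coprime (x (f r)) (int p)"
    using p by (simp add: prime_imp_coprime coprime_commute)
  moreover have "int p dvd (int a * x w - x (f w) - (int a - 1) * x (g w))" if "w \<in> S" for w
  proof -
    have "[int a * int w = int (f w) + (int a - 1) * int (g w)] (mod int p)"
      using aff S(1) that by (auto simp: affine_maps_def)
    moreover have "int a * x w - x (f w) - (int a - 1) * x (g w)
        = int a * int w - (int (f w) + (int a - 1) * int (g w))"
      by (simp add: x_def algebra_simps)
    ultimately show ?thesis by (simp add: cong_iff_dvd_diff)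
  qed
  ultimately have "p \<le> a ^ (card S - 1)"
    using modulus_le_power_card[OF a, of x] \<open>f r \<in> S\<close> by (simp add: x_def)
  also have "\<dots> \<le> a ^ (card R - 1)"
    using card_mono[OF \<open>finite R\<close> S(1)] a by (intro power_increasing) auto
  finally show ?thesis .
qed

lemma affine_maps_bij:
  assumes "finite R" and "affine_maps p a R f g"
  shows "bij_betw f R R"
  using assms by (simp add: affine_maps_def bij_betw_def endo_inj_surj)

lemma affine_maps_inverse:
  assumes "finite R" and aff: "affine_maps p a R f g" and inverse: "[a * b = 1] (mod p)"
  shows "affine_maps p b R (the_inv_into R f) (g \<circ> the_inv_into R f)"
proof -
  have bij: "bij_betw f R R" using \<open>finite R\<close> aff by (rule affine_maps_bij)
  then have bij_inv: "bij_betw (the_inv_into R f) R R" by (rule bij_betw_the_inv_into)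
  have "[int b * int i = int (the_inv_into R f i) + (int b - 1) * int (g (the_inv_into R f i))]
      (mod int p)" if i: "i \<in> R" for i
  proof -
    define j where "j = the_inv_into R f i"
    have "j \<in> R" "f j = i"
      using bij_betwE[OF bij_inv] f_the_inv_into_f_bij_betw[OF bij] i by (auto simp: j_def)
    then have "int p dvd int a * int j - int i - (int a - 1) * int (g j)"
      using aff by (auto simp: affine_maps_def cong_iff_dvd_diff diff_diff_eq)
    moreover have "int p dvd int a * int b - 1"
      using inverse by (simp add: cong_iff_dvd_diff flip: cong_int_iff)
    ultimately have "int p dvd - int b * (int a * int j - int i - (int a - 1) * int (g j))
        + (int a * int b - 1) * (int j - int (g j))"
      by (intro dvd_add dvd_mult dvd_mult2)
    then show ?thesis by (simp add: j_def cong_iff_dvd_diff algebra_simps)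
  qed
  moreover have "inj_on (g \<circ> the_inv_into R f) R" "(g \<circ> the_inv_into R f) ` R \<subseteq> R"
    using aff bij_inv by (auto simp: affine_maps_def bij_betw_def image_comp[symmetric] intro: comp_inj_on)
  ultimately show ?thesis
    using bij_inv by (auto simp: affine_maps_def bij_betw_def)
qed

lemma cong_solve_affine_nat:
  fixes m p s e :: nat
  assumes "coprime m p" and "0 < p"
  obtains t where "t < p" "[m * t + s = e] (mod p)"
proof -
  obtain y where y: "[int m * y = 1] (mod int p)"
    using cong_solve_coprime_int assms(1) by (metis coprime_int_iff)
  define t where "t = nat ((y * (int e - int s)) mod int p)"
  have t: "int t = (y * (int e - int s)) mod int p" using assms(2) by (simp add: t_def)
  have "[int m * int t = int m * y * (int e - int s)] (mod int p)"
    by (simp add: t cong_def mod_mult_right_eq ac_simps)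
  also have "[int m * y * (int e - int s) = 1 * (int e - int s)] (mod int p)"
    by (rule cong_scalar_right[OF y])
  finally have "[int (m * t + s) = int e] (mod int p)"
    by (simp add: cong_iff_dvd_diff algebra_simps)
  then have "[m * t + s = e] (mod p)" by (simp only: cong_int_iff)
  moreover have "t < p" using assms(2) by (simp add: t_def nat_less_iff)
  ultimately show thesis by (rule that[rotated])
qed

lemma mem_Bp: "(i, j, t) \<in> Bp p l \<longleftrightarrow> i < p \<and> j < p \<and> t = (l * i + j) mod p"
  by (auto simp: Bp_def)

lemma Bp_row_symbol_unique:
  assumes "(i, j, t) \<in> Bp p l" and "(i, j', t) \<in> Bp p l"
  shows "j = j'"
proof -
  have "[l * i + j = l * i + j'] (mod p)" using assms by (simp add: mem_Bp cong_def)
  then show ?thesis using assms by (auto simp: mem_Bp cong_add_lcancel_nat cong_less_modulus_unique_nat)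
qed

lemma card_symbol_cells:
  assumes "T \<subseteq> Bp p l"
  shows "card {(i, j). (i, j, s) \<in> T} = card {i. \<exists>j. (i, j, s) \<in> T}"
proof -
  have "inj_on fst {(i, j). (i, j, s) \<in> T}"
  proof (rule inj_onI, clarsimp)
    fix i j j' assume "(i, j, s) \<in> T" "(i, j', s) \<in> T"
    with assms show "j = j'" by (blast intro: Bp_row_symbol_unique)
  qed
  moreover have "fst ` {(i, j). (i, j, s) \<in> T} = {i. \<exists>j. (i, j, s) \<in> T}"
    by (auto simp: image_iff)
  ultimately show ?thesis using card_image by fastforce
qed

lemma orthogonal_Bp_cell_unique:
  assumes orth: "orthogonal p L (Bp p k)" and "s < p"
    and "(i, j, s) \<in> L" "(i', j', s) \<in> L" "i < p" "j < p" "i' < p" "j' < p"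
    and "[k * i + j = k * i' + j'] (mod p)"
  shows "i = i'"
proof -
  define b where "b = (k * i + j) mod p"
  define P where "P c \<longleftrightarrow> fst c < p \<and> snd c < p \<and> (fst c, snd c, s) \<in> L \<and> (fst c, snd c, b) \<in> Bp p k"
    for c
  have "b < p" using \<open>i < p\<close> by (simp add: b_def)
  then have "\<exists>!c. P c" using orth \<open>s < p\<close> unfolding orthogonal_def P_def by blast
  moreover have "P (i, j)" "P (i', j')"
    using assms by (simp_all add: P_def b_def mem_Bp cong_def)
  ultimately have "(i, j) = (i', j')" by blast
  then show ?thesis by simp
qed

lemma disjoint_mate_row_map:
  assumes T: "T \<subseteq> Bp p l" and mate: "disjoint_mate p T T'"
  obtains \<sigma> c where "\<forall>i\<in>{i. \<exists>j. (i, j, s) \<in> T}. (i, c i, s) \<in> T' \<and> (\<sigma> i, c i, s) \<in> T"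
    "\<sigma> ` {i. \<exists>j. (i, j, s) \<in> T} \<subseteq> {i. \<exists>j. (i, j, s) \<in> T}"
    "inj_on \<sigma> {i. \<exists>j. (i, j, s) \<in> T}" "\<forall>i\<in>{i. \<exists>j. (i, j, s) \<in> T}. \<sigma> i \<noteq> i"
proof -
  define R where "R = {i. \<exists>j. (i, j, s) \<in> T}"
  have "\<exists>c. (i, c, s) \<in> T' \<and> (\<exists>i'. (i', c, s) \<in> T)" if "i \<in> R" for i
  proof -
    have "s \<in> row_syms T i" using that by (auto simp: R_def row_syms_def)
    moreover have "row_syms T' i = row_syms T i" using mate by (simp add: disjoint_mate_def)
    ultimately obtain c where c: "(i, c, s) \<in> T'" by (auto simp: row_syms_def)
    then have "s \<in> col_syms T' c" by (auto simp: col_syms_def)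
    moreover have "col_syms T' c = col_syms T c" using mate by (simp add: disjoint_mate_def)
    ultimately have "s \<in> col_syms T c" by simp
    with c show ?thesis by (auto simp: col_syms_def)
  qed
  then obtain c where c: "\<forall>i\<in>R. (i, c i, s) \<in> T' \<and> (\<exists>i'. (i', c i, s) \<in> T)"
    using bchoice[of R "\<lambda>i c. (i, c, s) \<in> T' \<and> (\<exists>i'. (i', c, s) \<in> T)"] by blast
  then obtain \<sigma> where \<sigma>: "\<forall>i\<in>R. (\<sigma> i, c i, s) \<in> T"
    using bchoice[of R "\<lambda>i i'. (i', c i, s) \<in> T"] by blast
  have "inj_on \<sigma> R"
  proof (rule inj_onI)
    fix i i' assume "i \<in> R" "i' \<in> R" "\<sigma> i = \<sigma> i'"
    then have "(\<sigma> i, c i, s) \<in> Bp p l" "(\<sigma> i, c i', s) \<in> Bp p l" using \<sigma> T by auto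
    then have "c i = c i'" by (rule Bp_row_symbol_unique)
    then have "(i, c i, s) \<in> T'" "(i', c i, s) \<in> T'" using c \<open>i \<in> R\<close> \<open>i' \<in> R\<close> by auto
    moreover have "partial_latin_square p T'" using mate by (simp add: disjoint_mate_def)
    ultimately show "i = i'" unfolding partial_latin_square_def by blast
  qed
  moreover have "\<sigma> ` R \<subseteq> R" using \<sigma> by (auto simp: R_def)
  moreover have "\<forall>i\<in>R. \<sigma> i \<noteq> i" using c \<sigma> mate by (auto simp: disjoint_mate_def)
  ultimately show thesis
    using c \<sigma> by (intro that[of c \<sigma>]) (simp_all add: R_def)
qed

lemma orthogonal_row_map:
  assumes p: "prime p" and k: "2 \<le> k" "k < p" and T: "T \<subseteq> Bp p 1"
    and orth: "orthogonal p ((Bp p 1 - T) \<union> T') (Bp p k)"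
    and T': "partial_latin_square p T'"
    and c: "\<forall>i\<in>{i. \<exists>j. (i, j, s) \<in> T}. (i, c i, s) \<in> T'"
  obtains \<tau> where "\<tau> ` {i. \<exists>j. (i, j, s) \<in> T} \<subseteq> {i. \<exists>j. (i, j, s) \<in> T}"
    "inj_on \<tau> {i. \<exists>j. (i, j, s) \<in> T}"
    "\<forall>i\<in>{i. \<exists>j. (i, j, s) \<in> T}. [(k - 1) * \<tau> i + s = k * i + c i] (mod p)"
proof -
  define R where "R = {i. \<exists>j. (i, j, s) \<in> T}"
  define L where "L = (Bp p 1 - T) \<union> T'"
  have cell_L: "(i, c i, s) \<in> L" "i < p" "c i < p" "s < p" if "i \<in> R" for i
    using c T' that unfolding R_def L_def partial_latin_square_def by auto
  have "coprime (k - 1) p"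
    using p k by (simp add: prime_imp_coprime coprime_commute nat_dvd_not_less)
  text \<open>In row \<open>t\<close> the cell of \<open>B_p\<close> holding \<open>s\<close> has \<open>B_p(k)\<close>-symbol \<open>k i + c i\<close>; if \<open>t \<notin> R\<close>
    that cell survives in the new square, and orthogonality identifies it with \<open>(i, c i)\<close>.\<close>
  have "\<exists>t\<in>R. [(k - 1) * t + s = k * i + c i] (mod p)" if i: "i \<in> R" for i
  proof -
    obtain t where "t < p" and t: "[(k - 1) * t + s = k * i + c i] (mod p)"
      using cong_solve_affine_nat[OF \<open>coprime (k - 1) p\<close>] k by auto
    define j where "j = (s + (p - t)) mod p"
    have "j < p" "(t, j, s) \<in> Bp p 1"
      using \<open>t < p\<close> cell_L[OF i] by (auto simp: j_def mem_Bp mod_add_right_eq)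
    have "t \<le> k * t" using k by simp
    have "[k * t + j = k * t + (s + (p - t))] (mod p)"
      by (simp add: j_def cong_def mod_add_right_eq)
    also have "k * t + (s + (p - t)) = (k - 1) * t + s + p"
      unfolding diff_mult_distrib mult_1 using \<open>t < p\<close> \<open>t \<le> k * t\<close> by linarith
    also have "[\<dots> = (k - 1) * t + s] (mod p)" by (simp add: cong_def)
    also note t
    finally have cong: "[k * t + j = k * i + c i] (mod p)" .
    show ?thesis
    proof (cases "t \<in> R")
      case False
      then have "(t, j, s) \<in> L" using \<open>(t, j, s) \<in> Bp p 1\<close> by (auto simp: L_def R_def)
      with cell_L[OF i] orth cong \<open>t < p\<close> \<open>j < p\<close> have "t = i"
        unfolding L_def by (blast intro: orthogonal_Bp_cell_unique)
      with False i show ?thesis by simp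
    qed (use t in blast)
  qed
  then obtain \<tau> where \<tau>: "\<forall>i\<in>R. \<tau> i \<in> R \<and> [(k - 1) * \<tau> i + s = k * i + c i] (mod p)"
    using bchoice[of R "\<lambda>i t. t \<in> R \<and> [(k - 1) * t + s = k * i + c i] (mod p)"] by blast
  have "inj_on \<tau> R"
  proof (rule inj_onI)
    fix i i' assume "i \<in> R" "i' \<in> R" "\<tau> i = \<tau> i'"
    with \<tau> have "[k * i + c i = k * i' + c i'] (mod p)" by (metis cong_sym cong_trans)
    with cell_L[OF \<open>i \<in> R\<close>] cell_L[OF \<open>i' \<in> R\<close>] orth show "i = i'"
      unfolding L_def by (blast intro: orthogonal_Bp_cell_unique)
  qed
  with \<tau> show thesis by (intro that) (auto simp: R_def)
qed

lemma orthogonal_trade_affine_maps: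
  assumes p: "prime p" and k: "2 \<le> k" "k < p" and trade: "orthogonal_trade p 1 k T"
  obtains \<sigma> \<tau> where "affine_maps p k {i. \<exists>j. (i, j, s) \<in> T} \<sigma> \<tau>"
    "\<forall>i\<in>{i. \<exists>j. (i, j, s) \<in> T}. \<sigma> i \<noteq> i"
proof -
  define R where "R = {i. \<exists>j. (i, j, s) \<in> T}"
  from trade obtain T' where T: "T \<subseteq> Bp p 1" and mate: "disjoint_mate p T T'"
    and orth: "orthogonal p ((Bp p 1 - T) \<union> T') (Bp p k)"
    unfolding orthogonal_trade_def by blast
  obtain c \<sigma> where cells: "\<forall>i\<in>R. (i, c i, s) \<in> T' \<and> (\<sigma> i, c i, s) \<in> T"
    and \<sigma>: "\<sigma> ` R \<subseteq> R" "inj_on \<sigma> R" "\<forall>i\<in>R. \<sigma> i \<noteq> i"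
    unfolding R_def by (rule disjoint_mate_row_map[OF T mate])
  moreover have "partial_latin_square p T'" using mate by (simp add: disjoint_mate_def)
  ultimately obtain \<tau> where \<tau>: "\<tau> ` R \<subseteq> R" "inj_on \<tau> R"
    "\<forall>i\<in>R. [(k - 1) * \<tau> i + s = k * i + c i] (mod p)"
    unfolding R_def using orthogonal_row_map[OF p k T orth] by blast
  have "[int k * int i = int (\<sigma> i) + (int k - 1) * int (\<tau> i)] (mod int p)" if i: "i \<in> R" for i
  proof -
    have "[\<sigma> i + c i = s] (mod p)" using cells i T by (auto simp: mem_Bp cong_def)
    from cong_add[OF this \<tau>(3)[rule_format, OF i]]
    have "[(\<sigma> i + (k - 1) * \<tau> i) + (c i + s) = k * i + (c i + s)] (mod p)"
      by (simp only: ac_simps)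
    then have "[k * i = \<sigma> i + (k - 1) * \<tau> i] (mod p)"
      by (simp add: cong_add_rcancel_nat cong_sym_eq)
    then show ?thesis using k by (simp add: of_nat_diff flip: cong_int_iff)
  qed
  with \<sigma> \<tau> have "affine_maps p k R \<sigma> \<tau>" by (simp add: affine_maps_def)
  then show thesis using \<sigma>(3) unfolding R_def by (rule that)
qed

lemma log_less_of_prime_le_power:
  assumes "prime p" and "1 < K" "K < p" and "p \<le> K ^ n"
  shows "log (real K) (real p) < n"
proof -
  have "p \<noteq> K ^ n"
  proof
    assume "p = K ^ n"
    moreover have "n \<noteq> 0" using assms(1) \<open>p = K ^ n\<close> by (cases n) auto
    ultimately have "K dvd p" by simp
    with assms show False by (auto simp: prime_nat_iff)
  qed
  with assms(4) have "real p < real K ^ n" by (simp flip: of_nat_power)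
  then show ?thesis using assms(1,2) log_of_power_less prime_gt_0_nat by auto
qed

lemma inverse_mod_ge_two:
  fixes k k' p :: nat
  assumes "2 \<le> k" and "k < p" and "(k * k') mod p = 1"
  shows "2 \<le> k'"
proof (rule ccontr)
  assume "\<not> 2 \<le> k'"
  then consider "k' = 0" | "k' = 1" by linarith
  then show False using assms by cases auto
qed

lemma affine_maps_bound_min:
  assumes p: "prime p" and R: "R \<subseteq> {..<p}" and r: "r \<in> R" and "2 \<le> a" "2 \<le> b"
    and inverse: "[a * b = 1] (mod p)"
    and aff: "affine_maps p a R f g" and moved: "\<forall>i\<in>R. f i \<noteq> i"
  shows "p \<le> min a b ^ (card R - 1)"
proof -
  have "finite R" using R finite_subset by blast
  have "p \<le> a ^ (card R - 1)" using affine_maps_bound[OF p R r \<open>2 \<le> a\<close> aff] moved r by blast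
  moreover have "the_inv_into R f r \<noteq> r"
    using moved r affine_maps_bij[OF \<open>finite R\<close> aff] by (metis f_the_inv_into_f_bij_betw)
  then have "p \<le> b ^ (card R - 1)"
    using affine_maps_bound[OF p R r \<open>2 \<le> b\<close> affine_maps_inverse[OF \<open>finite R\<close> aff inverse]]
    by blast
  ultimately show ?thesis by (simp add: min_def)
qed

theorem theorem3p4:
  fixes p k kinv :: nat and T :: "triple set"
  assumes "prime p" and "odd p"
    and "2 \<le> k" and "k \<le> p - 1"
    and "kinv < p" and "(k * kinv) mod p = 1"
    and "orthogonal_trade p 1 k T"
  shows "\<forall>s. (\<exists>i j. (i, j, s) \<in> T) \<longrightarrow>
           real (card {(i, j). (i, j, s) \<in> T}) > log (real (min k kinv)) (real p) + 1"
proof (intro allI impI)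
  fix s assume "\<exists>i j. (i, j, s) \<in> T"
  define R where "R = {i. \<exists>j. (i, j, s) \<in> T}"
  from \<open>\<exists>i j. (i, j, s) \<in> T\<close> obtain r where r: "r \<in> R" by (auto simp: R_def)
  have p: "prime p" "1 < p" using assms(1) prime_gt_1_nat by auto
  have k: "2 \<le> k" "k < p" "2 \<le> kinv"
    using assms(3,4,6) p(2) inverse_mod_ge_two[of k p kinv] by auto
  have T: "T \<subseteq> Bp p 1" using assms(7) by (simp add: orthogonal_trade_def)
  then have R: "R \<subseteq> {..<p}" by (auto simp: R_def mem_Bp)
  obtain \<sigma> \<tau> where aff: "affine_maps p k R \<sigma> \<tau>" and moved: "\<forall>i\<in>R. \<sigma> i \<noteq> i"
    unfolding R_def by (rule orthogonal_trade_affine_maps[OF p(1) k(1,2) assms(7)])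
  have "[k * kinv = 1] (mod p)" using assms(6) p(2) by (simp add: cong_def)
  with p R r k aff moved have "p \<le> min k kinv ^ (card R - 1)" by (intro affine_maps_bound_min)
  then have "log (real (min k kinv)) (real p) < card R - 1"
    using log_less_of_prime_le_power[OF p(1)] k by simp
  moreover have "card R \<ge> 1" using r R finite_subset by (auto simp: Suc_le_eq card_gt_0_iff)
  ultimately show "real (card {(i, j). (i, j, s) \<in> T}) > log (real (min k kinv)) (real p) + 1"
    using card_symbol_cells[OF T] by (simp add: R_def of_nat_diff)
qed

end
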